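(* Let $t\ge2$ and let $A_1,\dots,A_t$ be jointly distributed random variables on a finite set whose joint distribution is invariant under all permutations of $(A_1,\dots,A_t)$. Let $\{A_1\cdots A_t\}$ denote their joint distribution and $\{A_1\}\cdots\{A_t\}$ the product of their marginal distributions. If $d_H(\{A_1\cdots A_t\},\{A_1\}\cdots\{A_t\})\ge\epsilon$, then $H(A_t\mid A_1,\dots,A_{t-1})\le H(A_1)-2\epsilon^2/t^2$.
   Context: $H$ denotes Shannon entropy with natural logarithm and $H(X\mid Y)=\mathbb{E}_{y}H(X\mid Y=y)$. The Hellinger distance between distributions $p,q$ on a finite set is $d_H(p,q)=\left(1-\sum_i\sqrt{p_iq_i}\right)^{1/2}$. *)

theory Defs
  imports "HOL-Combinatorics.Permutations" Complex_Main
begin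

text \<open>A joint distribution of t random variables on a finite type 'a is a
function p on lists of length t (the outcomes (a_1,...,a_t)).\<close>

definition tuples :: "nat \<Rightarrow> 'a list set" where
  "tuples t = {xs. length xs = t}"

text \<open>Marginal distribution of A_(i+1) (0-based index i).\<close>
definition marg :: "('a list \<Rightarrow> real) \<Rightarrow> nat \<Rightarrow> nat \<Rightarrow> 'a \<Rightarrow> real" where
  "marg p t i a = (\<Sum>xs\<in>{xs \<in> tuples t. xs ! i = a}. p xs)"

definition prod_marg :: "('a list \<Rightarrow> real) \<Rightarrow> nat \<Rightarrow> 'a list \<Rightarrow> real" where
  "prod_marg p t xs = (\<Prod>i<t. marg p t i (xs ! i))"

definition hellinger :: "'b set \<Rightarrow> ('b \<Rightarrow> real) \<Rightarrow> ('b \<Rightarrow> real) \<Rightarrow> real" where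
  "hellinger S p q = sqrt (1 - (\<Sum>x\<in>S. sqrt (p x * q x)))"

text \<open>Shannon entropy (natural log); note ln 0 = 0 in Isabelle, so 0 ln 0 = 0.\<close>
definition entropy_fun :: "'b set \<Rightarrow> ('b \<Rightarrow> real) \<Rightarrow> real" where
  "entropy_fun S f = - (\<Sum>x\<in>S. f x * ln (f x))"

definition cond_entropy_last :: "('a::finite list \<Rightarrow> real) \<Rightarrow> nat \<Rightarrow> real" where
  "cond_entropy_last p t =
     (\<Sum>ys\<in>tuples (t - 1).
        (let Py = (\<Sum>x\<in>UNIV. p (ys @ [x]))
         in Py * entropy_fun UNIV (\<lambda>x. p (ys @ [x]) / Py)))"

end

theory Submission imports Defs "HOL-Analysis.L2_Norm" begin

text \<open>
  Interpolate between the joint law \<open>p\<close> and the product of its marginals by hybrids: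
  in \<open>h\<^sub>k\<close> the first \<open>k\<close> coordinates are distributed jointly as under \<open>p\<close> and the
  remaining ones independently with the common marginal \<open>\<mu>\<close>, so \<open>h\<^sub>t = p\<close> and \<open>h\<^sub>1\<close> is
  the product of the marginals. Since \<open>\<surd>f - \<surd>g\<close> obeys the triangle inequality in \<open>L\<^sup>2\<close>,
  the Hellinger distance is at most the sum of the \<open>t - 1\<close> distances between consecutive
  hybrids. Those differ only in whether coordinate \<open>k\<close> is drawn jointly with the first
  \<open>k - 1\<close> or independently of them; marginalising the later coordinates can only increase
  the Bhattacharyya coefficient, and exchangeability moves coordinate \<open>k\<close> to the last place.
  So each step is bounded by the distance between \<open>p\<close> and the law in which the last
  coordinate is redrawn independently from \<open>\<mu>\<close>. The relative entropy of \<open>p\<close> with respect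
  to that law is \<open>H(A\<^sub>1) - H(A\<^sub>t | A\<^sub>1,\<dots>,A\<^sub>t\<^sub>-\<^sub>1)\<close>, and relative entropy is at
  least twice the squared Hellinger distance.
\<close>

lemma finite_tuples [simp]: "finite (tuples n :: 'a::finite list set)"
proof -
  have "tuples n = {xs::'a list. set xs \<subseteq> UNIV \<and> length xs = n}"
    by (auto simp: tuples_def)
  then show ?thesis
    using finite_lists_length_eq[of "UNIV::'a set" n] by simp
qed

lemma sum_tuples_append:
  fixes f :: "'a::finite list \<Rightarrow> 'b::comm_monoid_add"
  assumes "k \<le> n"
  shows "(\<Sum>xs\<in>tuples n. f xs) = (\<Sum>ys\<in>tuples k. \<Sum>zs\<in>tuples (n - k). f (ys @ zs))"
proof -
  have "(\<Sum>ys\<in>tuples k. \<Sum>zs\<in>tuples (n - k). f (ys @ zs))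
      = (\<Sum>(ys, zs)\<in>tuples k \<times> tuples (n - k). f (ys @ zs))"
    by (rule sum.cartesian_product)
  also have "\<dots> = (\<Sum>xs\<in>tuples n. f xs)"
    by (rule sum.reindex_bij_witness[where i="\<lambda>xs. (take k xs, drop k xs)" and j="\<lambda>(ys, zs). ys @ zs"])
       (use assms in \<open>auto simp: tuples_def\<close>)
  finally show ?thesis by simp
qed

lemma sum_tuples_Suc_0:
  fixes f :: "'a::finite list \<Rightarrow> 'b::comm_monoid_add"
  shows "(\<Sum>xs\<in>tuples (Suc 0). f xs) = (\<Sum>x\<in>UNIV. f [x])"
proof -
  have "tuples (Suc 0) = range (\<lambda>x::'a. [x])"
    by (auto simp: tuples_def length_Suc_conv)
  then show ?thesis by (simp add: sum.reindex inj_on_def)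
qed

lemma sum_tuples_Cons:
  fixes f :: "'a::finite list \<Rightarrow> 'b::comm_monoid_add"
  shows "(\<Sum>xs\<in>tuples (Suc n). f xs) = (\<Sum>x\<in>UNIV. \<Sum>zs\<in>tuples n. f (x # zs))"
  using sum_tuples_append[of 1 "Suc n" f] by (simp add: sum_tuples_Suc_0)

lemma sum_tuples_snoc:
  fixes f :: "'a::finite list \<Rightarrow> 'b::comm_monoid_add"
  shows "(\<Sum>xs\<in>tuples (Suc n). f xs) = (\<Sum>ys\<in>tuples n. \<Sum>x\<in>UNIV. f (ys @ [x]))"
  using sum_tuples_append[of n "Suc n" f] by (simp add: sum_tuples_Suc_0)

lemma sum_tuples_split_at:
  fixes f :: "'a::finite list \<Rightarrow> 'b::comm_monoid_add"
  assumes "k < n"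
  shows "(\<Sum>xs\<in>tuples n. f xs)
       = (\<Sum>ys\<in>tuples k. \<Sum>y\<in>UNIV. \<Sum>zs\<in>tuples (n - Suc k). f (ys @ y # zs))"
  using assms by (simp add: sum_tuples_append[of "Suc k" n] sum_tuples_snoc)

lemma sum_tuples_prod_list:
  fixes m :: "'a::finite \<Rightarrow> 'b::comm_semiring_1"
  shows "(\<Sum>zs\<in>tuples j. prod_list (map m zs)) = sum m UNIV ^ j"
proof (induction j)
  case 0
  then show ?case by (simp add: tuples_def)
next
  case (Suc j)
  then show ?case
    by (simp add: sum_tuples_Cons sum_distrib_left[symmetric] sum_distrib_right[symmetric])
qed

lemma sum_tuples_permute_list:
  fixes f :: "'a::finite list \<Rightarrow> 'b::comm_monoid_add"
  assumes \<sigma>: "\<sigma> permutes {..<n}"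
  shows "(\<Sum>xs\<in>tuples n. f (permute_list \<sigma> xs)) = (\<Sum>xs\<in>tuples n. f xs)"
proof (rule sum.reindex_bij_witness[where i="permute_list (inv \<sigma>)" and j="permute_list \<sigma>"])
  fix xs :: "'a list"
  assume "xs \<in> tuples n"
  then have "length xs = n" by (simp add: tuples_def)
  then show "permute_list \<sigma> (permute_list (inv \<sigma>) xs) = xs"
    and "permute_list (inv \<sigma>) (permute_list \<sigma> xs) = xs"
    using permute_list_compose[of "inv \<sigma>" xs \<sigma>] permute_list_compose[of \<sigma> xs "inv \<sigma>"]
      permutes_inv[OF \<sigma>] permutes_inv_o[OF \<sigma>] \<sigma> by simp_all
qed (simp_all add: tuples_def)

lemma prod_list_map_nth: "prod_list (map f xs) = (\<Prod>i<length xs. f (xs ! i))"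
  by (induction xs) (auto simp del: prod.lessThan_Suc simp: prod.lessThan_Suc_shift)

section \<open>Bhattacharyya coefficient and Hellinger distance\<close>

definition bhattacharyya :: "'b set \<Rightarrow> ('b \<Rightarrow> real) \<Rightarrow> ('b \<Rightarrow> real) \<Rightarrow> real" where
  "bhattacharyya S f g = (\<Sum>x\<in>S. sqrt (f x * g x))"

text \<open>\<open>\<surd>2\<close> times the Hellinger distance, but defined for all nonnegative functions and
  satisfying the triangle inequality.\<close>
definition sqrt_dist :: "'b set \<Rightarrow> ('b \<Rightarrow> real) \<Rightarrow> ('b \<Rightarrow> real) \<Rightarrow> real" where
  "sqrt_dist S f g = L2_set (\<lambda>x. sqrt (f x) - sqrt (g x)) S"

lemma sqrt_dist_nonneg: "sqrt_dist S f g \<ge> 0"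
  by (simp add: sqrt_dist_def)

lemma sqrt_dist_sq:
  assumes "\<And>x. x \<in> S \<Longrightarrow> f x \<ge> 0" "\<And>x. x \<in> S \<Longrightarrow> g x \<ge> 0"
  shows "(sqrt_dist S f g)\<^sup>2 = sum f S + sum g S - 2 * bhattacharyya S f g"
proof -
  have "(sqrt_dist S f g)\<^sup>2 = (\<Sum>x\<in>S. (sqrt (f x) - sqrt (g x))\<^sup>2)"
    by (simp add: sqrt_dist_def L2_set_def sum_nonneg)
  also have "\<dots> = (\<Sum>x\<in>S. f x + g x - 2 * sqrt (f x * g x))"
    using assms by (intro sum.cong refl) (simp add: power2_diff real_sqrt_mult)
  finally show ?thesis
    by (simp add: bhattacharyya_def sum.distrib sum_subtractf sum_distrib_left)
qed

lemma hellinger_sq: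
  assumes "\<And>x. x \<in> S \<Longrightarrow> f x \<ge> 0" "\<And>x. x \<in> S \<Longrightarrow> g x \<ge> 0"
    and "sum f S = 1" "sum g S = 1"
  shows "(hellinger S f g)\<^sup>2 = (sqrt_dist S f g)\<^sup>2 / 2"
proof -
  have "(sqrt_dist S f g)\<^sup>2 = 2 - 2 * bhattacharyya S f g"
    using sqrt_dist_sq[of S f g] assms by simp
  moreover have "1 - bhattacharyya S f g \<ge> 0"
    using calculation zero_le_power2[of "sqrt_dist S f g"] by linarith
  ultimately show ?thesis
    by (simp add: hellinger_def bhattacharyya_def)
qed

lemma sqrt_dist_telescope:
  "sqrt_dist S (f j) (f 0) \<le> (\<Sum>k<j. sqrt_dist S (f (Suc k)) (f k))"
proof (induction j)
  case 0
  then show ?case by (simp add: sqrt_dist_def L2_set_def)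
next
  case (Suc j)
  have "sqrt_dist S (f (Suc j)) (f 0) \<le> sqrt_dist S (f (Suc j)) (f j) + sqrt_dist S (f j) (f 0)"
    unfolding sqrt_dist_def
    using L2_set_triangle_ineq[of "\<lambda>x. sqrt (f (Suc j) x) - sqrt (f j x)"
        "\<lambda>x. sqrt (f j x) - sqrt (f 0 x)" S]
    by simp
  then show ?case using Suc by simp
qed

lemma sum_sqrt_mult_le:
  assumes "\<And>x. x \<in> A \<Longrightarrow> a x \<ge> 0" "\<And>x. x \<in> A \<Longrightarrow> b x \<ge> 0"
  shows "(\<Sum>x\<in>A. sqrt (a x * b x)) \<le> sqrt (sum a A * sum b A)"
proof -
  have "(\<Sum>x\<in>A. sqrt (a x * b x)) = (\<Sum>x\<in>A. \<bar>sqrt (a x)\<bar> * \<bar>sqrt (b x)\<bar>)"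
    using assms by (intro sum.cong) (auto simp: real_sqrt_mult)
  also have "\<dots> \<le> L2_set (\<lambda>x. sqrt (a x)) A * L2_set (\<lambda>x. sqrt (b x)) A"
    by (rule L2_set_mult_ineq)
  also have "\<dots> = sqrt (sum a A * sum b A)"
    using assms by (simp add: L2_set_def real_sqrt_mult)
  finally show ?thesis .
qed

lemma mult_ln_div_ge:
  fixes a b :: real
  assumes "a \<ge> 0" "b \<ge> 0" "a > 0 \<Longrightarrow> b > 0"
  shows "a * ln (a / b) \<ge> 2 * a - 2 * sqrt (a * b)"
proof (cases "a = 0")
  case False
  then have a: "a > 0" and b: "b > 0" using assms by auto
  have "ln (b / a) = 2 * ln (sqrt (b / a))"
    using a b by (simp add: ln_sqrt)
  also have "\<dots> \<le> 2 * (sqrt (b / a) - 1)"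
    using ln_le_minus_one[of "sqrt (b / a)"] a b by simp
  finally have "a * ln (b / a) \<le> a * (2 * (sqrt (b / a) - 1))"
    using a by (simp add: mult_left_mono)
  moreover have "a * sqrt (b / a) = sqrt (a * b)"
    using a by (simp add: real_sqrt_divide real_sqrt_mult field_simps)
  moreover have "ln (a / b) = - ln (b / a)"
    using a b by (simp add: ln_div)
  ultimately show ?thesis by (simp add: algebra_simps)
qed simp

lemma relative_entropy_ge_bhattacharyya:
  assumes "\<And>x. x \<in> S \<Longrightarrow> p x \<ge> 0" "\<And>x. x \<in> S \<Longrightarrow> q x \<ge> 0"
    and "\<And>x. x \<in> S \<Longrightarrow> p x > 0 \<Longrightarrow> q x > 0"
  shows "(\<Sum>x\<in>S. p x * ln (p x / q x)) \<ge> 2 * sum p S - 2 * bhattacharyya S p q"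
proof -
  have "2 * sum p S - 2 * bhattacharyya S p q = (\<Sum>x\<in>S. 2 * p x - 2 * sqrt (p x * q x))"
    by (simp add: bhattacharyya_def sum_subtractf sum_distrib_left)
  also have "\<dots> \<le> (\<Sum>x\<in>S. p x * ln (p x / q x))"
    using assms by (intro sum_mono mult_ln_div_ge) auto
  finally show ?thesis .
qed

lemma scaled_entropy_normalize:
  fixes a :: "'a::finite \<Rightarrow> real"
  assumes "\<And>x. a x \<ge> 0"
  shows "(let S = (\<Sum>x\<in>UNIV. a x) in S * entropy_fun UNIV (\<lambda>x. a x / S))
       = - (\<Sum>x\<in>UNIV. a x * ln (a x / (\<Sum>x\<in>UNIV. a x)))"
proof (cases "(\<Sum>x\<in>UNIV. a x) = 0")
  case True
  then have "\<forall>x\<in>UNIV. a x = 0"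
    using assms by (subst sum_nonneg_eq_0_iff[symmetric]) auto
  then show ?thesis by (simp add: Let_def entropy_fun_def)
next
  case False
  then show ?thesis
    by (simp add: Let_def entropy_fun_def sum_distrib_left sum_negf)
qed

section \<open>Exchangeable distributions on tuples\<close>

locale exchangeable =
  fixes p :: "'a::finite list \<Rightarrow> real" and n :: nat
  assumes n_pos: "0 < n"
    and nonneg: "\<And>xs. xs \<in> tuples n \<Longrightarrow> p xs \<ge> 0"
    and sum_eq_1: "(\<Sum>xs\<in>tuples n. p xs) = 1"
    and permute_invariant:
      "\<And>\<sigma> xs. \<sigma> permutes {..<n} \<Longrightarrow> xs \<in> tuples n \<Longrightarrow> p (map (\<lambda>i. xs ! \<sigma> i) [0..<n]) = p xs"
begin

abbreviation \<mu> :: "'a \<Rightarrow> real" where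
  "\<mu> \<equiv> marg p n 0"

lemma p_permute_list:
  "\<sigma> permutes {..<n} \<Longrightarrow> xs \<in> tuples n \<Longrightarrow> p (permute_list \<sigma> xs) = p xs"
  using permute_invariant by (simp add: permute_list_def tuples_def)

lemma marg_eq_sum_if: "marg p n i a = (\<Sum>xs\<in>tuples n. if xs ! i = a then p xs else 0)"
  by (simp add: marg_def sum.inter_filter[symmetric])

lemma marg_eq_\<mu>:
  assumes "i < n"
  shows "marg p n i = \<mu>"
proof
  fix a
  let ?\<tau> = "Transposition.transpose 0 i"
  have \<tau>: "?\<tau> permutes {..<n}"
    using assms n_pos by (intro permutes_swap_id) auto
  have "marg p n i a = (\<Sum>xs\<in>tuples n. if permute_list ?\<tau> xs ! i = a then p (permute_list ?\<tau> xs) else 0)"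
    unfolding marg_eq_sum_if by (rule sum_tuples_permute_list[OF \<tau>, symmetric])
  also have "\<dots> = \<mu> a"
    unfolding marg_eq_sum_if using assms n_pos \<tau>
    by (intro sum.cong refl) (auto simp: permute_list_nth p_permute_list tuples_def)
  finally show "marg p n i a = \<mu> a" .
qed

lemma marg_nonneg: "marg p n i a \<ge> 0"
  unfolding marg_def by (rule sum_nonneg) (auto simp: nonneg)

lemma le_marg: "xs \<in> tuples n \<Longrightarrow> p xs \<le> marg p n i (xs ! i)"
  unfolding marg_def by (rule member_le_sum) (auto simp: nonneg)

lemma sum_\<mu>: "(\<Sum>a\<in>UNIV. \<mu> a) = 1"
proof -
  have "(\<Sum>a\<in>UNIV. \<mu> a) = (\<Sum>xs\<in>tuples n. \<Sum>a\<in>UNIV. if xs ! 0 = a then p xs else 0)"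
    unfolding marg_eq_sum_if by (rule sum.swap)
  then show ?thesis using sum_eq_1 by simp
qed

definition prefix_marg :: "nat \<Rightarrow> 'a list \<Rightarrow> real" where
  "prefix_marg k ys = (\<Sum>zs\<in>tuples (n - k). p (ys @ zs))"

lemma prefix_marg_nonneg: "length ys = k \<Longrightarrow> k \<le> n \<Longrightarrow> prefix_marg k ys \<ge> 0"
  unfolding prefix_marg_def by (rule sum_nonneg) (auto simp: nonneg tuples_def)

lemma prefix_marg_n: "prefix_marg n xs = p xs"
  by (simp add: prefix_marg_def tuples_def)

lemma prefix_marg_1: "prefix_marg 1 [a] = \<mu> a"
proof -
  obtain n' where n': "n = Suc n'" using n_pos by (cases n) auto
  have "\<mu> a = (\<Sum>x\<in>UNIV. \<Sum>zs\<in>tuples n'. if (x # zs) ! 0 = a then p (x # zs) else 0)"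
    unfolding marg_eq_sum_if by (simp only: n' sum_tuples_Cons)
  also have "\<dots> = (\<Sum>x\<in>UNIV. if x = a then (\<Sum>zs\<in>tuples n'. p (a # zs)) else 0)"
    by (intro sum.cong refl) auto
  also have "\<dots> = prefix_marg 1 [a]"
    unfolding prefix_marg_def by (simp add: n')
  finally show ?thesis by simp
qed

lemma sum_prefix_marg_snoc: "k < n \<Longrightarrow> (\<Sum>y\<in>UNIV. prefix_marg (Suc k) (ys @ [y])) = prefix_marg k ys"
  by (simp add: prefix_marg_def sum_tuples_Cons flip: Suc_diff_Suc)

lemma prefix_marg_snoc:
  "length ys = k \<Longrightarrow> prefix_marg (Suc k) (ys @ [y]) = (\<Sum>zs\<in>tuples (n - Suc k). p (ys @ y # zs))"
  by (simp add: prefix_marg_def)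

lemma sum_prefix_marg: "k \<le> n \<Longrightarrow> (\<Sum>ys\<in>tuples k. prefix_marg k ys) = 1"
  unfolding prefix_marg_def using sum_tuples_append[of k n p] sum_eq_1 by simp

definition hybrid :: "nat \<Rightarrow> 'a list \<Rightarrow> real" where
  "hybrid k xs = prefix_marg k (take k xs) * prod_list (map \<mu> (drop k xs))"

lemma hybrid_nonneg:
  assumes "xs \<in> tuples n" "k \<le> n"
  shows "hybrid k xs \<ge> 0"
proof -
  have "prefix_marg k (take k xs) \<ge> 0"
    using assms by (intro prefix_marg_nonneg) (auto simp: tuples_def)
  moreover have "prod_list (map \<mu> (drop k xs)) \<ge> 0"
    by (rule prod_list_nonneg) (auto simp: marg_nonneg)
  ultimately show ?thesis by (simp add: hybrid_def)
qed

lemma sum_hybrid: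
  assumes k: "k \<le> n"
  shows "(\<Sum>xs\<in>tuples n. hybrid k xs) = 1"
proof -
  have "(\<Sum>xs\<in>tuples n. hybrid k xs)
      = (\<Sum>ys\<in>tuples k. \<Sum>zs\<in>tuples (n - k). prefix_marg k ys * prod_list (map \<mu> zs))"
    unfolding sum_tuples_append[OF k] hybrid_def
    by (intro sum.cong refl) (auto simp: tuples_def)
  also have "\<dots> = (\<Sum>ys\<in>tuples k. prefix_marg k ys)"
    by (simp add: sum_distrib_left[symmetric] sum_tuples_prod_list sum_\<mu>)
  finally show ?thesis using sum_prefix_marg[OF k] by simp
qed

lemma hybrid_n: "hybrid n xs = p xs" if "xs \<in> tuples n"
  using that by (simp add: hybrid_def prefix_marg_n tuples_def)

lemma hybrid_1: "hybrid 1 xs = prod_marg p n xs" if xs: "xs \<in> tuples n"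
proof -
  obtain x zs where xs': "xs = x # zs"
    using xs n_pos by (cases xs) (auto simp: tuples_def)
  have "hybrid 1 xs = prefix_marg 1 [x] * prod_list (map \<mu> zs)"
    by (simp add: hybrid_def xs')
  also have "\<dots> = prod_list (map \<mu> xs)"
    unfolding prefix_marg_1 xs' by simp
  also have "\<dots> = (\<Prod>i<n. \<mu> (xs ! i))"
    using xs by (simp add: prod_list_map_nth tuples_def)
  also have "\<dots> = (\<Prod>i<n. marg p n i (xs ! i))"
    by (intro prod.cong refl) (metis marg_eq_\<mu> lessThan_iff)
  finally show ?thesis by (simp add: prod_marg_def)
qed

lemma prod_marg_nonneg: "xs \<in> tuples n \<Longrightarrow> prod_marg p n xs \<ge> 0"
  using hybrid_nonneg[of xs 1] hybrid_1 n_pos by simp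

lemma sum_prod_marg: "(\<Sum>xs\<in>tuples n. prod_marg p n xs) = 1"
proof -
  have "(\<Sum>xs\<in>tuples n. prod_marg p n xs) = (\<Sum>xs\<in>tuples n. hybrid 1 xs)"
    by (rule sum.cong[OF refl hybrid_1[symmetric]])
  also have "\<dots> = 1"
    using n_pos by (intro sum_hybrid) simp
  finally show ?thesis .
qed

lemma hybrid_Suc_append:
  fixes ys zs :: "'a list"
  assumes "length ys = k" "length zs = n - Suc k" "k < n"
  shows "hybrid (Suc k) (ys @ y # zs) = prefix_marg (Suc k) (ys @ [y]) * prod_list (map \<mu> zs)"
    and "hybrid k (ys @ y # zs) = prefix_marg k ys * (\<mu> y * prod_list (map \<mu> zs))"
  using assms by (simp_all add: hybrid_def)

lemma bhattacharyya_hybrid_Suc: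
  assumes k: "k < n"
  shows "bhattacharyya (tuples n) (hybrid (Suc k)) (hybrid k)
       = (\<Sum>ys\<in>tuples k. \<Sum>y\<in>UNIV. sqrt (prefix_marg (Suc k) (ys @ [y]) * (prefix_marg k ys * \<mu> y)))"
proof -
  have "bhattacharyya (tuples n) (hybrid (Suc k)) (hybrid k)
      = (\<Sum>ys\<in>tuples k. \<Sum>y\<in>UNIV. \<Sum>zs\<in>tuples (n - Suc k).
           sqrt (prefix_marg (Suc k) (ys @ [y]) * (prefix_marg k ys * \<mu> y)) * prod_list (map \<mu> zs))"
    unfolding bhattacharyya_def sum_tuples_split_at[OF k]
  proof (intro sum.cong refl)
    fix ys zs :: "'a list" and y :: 'a
    assume "ys \<in> tuples k" "zs \<in> tuples (n - Suc k)"
    then have "hybrid (Suc k) (ys @ y # zs) * hybrid k (ys @ y # zs)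
        = prefix_marg (Suc k) (ys @ [y]) * (prefix_marg k ys * \<mu> y) * (prod_list (map \<mu> zs))\<^sup>2"
      using hybrid_Suc_append[of ys k zs y] k by (simp add: tuples_def power2_eq_square)
    moreover have "prod_list (map \<mu> zs) \<ge> 0"
      by (rule prod_list_nonneg) (auto simp: marg_nonneg)
    ultimately show "sqrt (hybrid (Suc k) (ys @ y # zs) * hybrid k (ys @ y # zs))
        = sqrt (prefix_marg (Suc k) (ys @ [y]) * (prefix_marg k ys * \<mu> y)) * prod_list (map \<mu> zs)"
      by (simp add: real_sqrt_mult)
  qed
  then show ?thesis
    by (simp add: sum_distrib_left[symmetric] sum_tuples_prod_list sum_\<mu>)
qed

text \<open>The law of \<open>p\<close> with coordinate \<open>j\<close> redrawn independently from \<open>\<mu>\<close>.\<close>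
definition resample :: "nat \<Rightarrow> 'a list \<Rightarrow> real" where
  "resample j xs = (\<Sum>y\<in>UNIV. p (xs[j := y])) * \<mu> (xs ! j)"

lemma resample_nonneg: "xs \<in> tuples n \<Longrightarrow> resample j xs \<ge> 0"
  unfolding resample_def
  by (intro mult_nonneg_nonneg sum_nonneg marg_nonneg) (auto intro!: nonneg simp: tuples_def)

lemma resample_pos:
  assumes xs: "xs \<in> tuples n" and j: "j < n" and pos: "p xs > 0"
  shows "resample j xs > 0"
proof -
  have "p (xs[j := xs ! j]) \<le> (\<Sum>y\<in>UNIV. p (xs[j := y]))"
    by (rule member_le_sum) (use xs in \<open>auto intro!: nonneg simp: tuples_def\<close>)
  then have "p xs \<le> (\<Sum>y\<in>UNIV. p (xs[j := y]))"
    by simp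
  moreover have "p xs \<le> \<mu> (xs ! j)"
    using le_marg[OF xs, of j] marg_eq_\<mu>[OF j] by simp
  ultimately show ?thesis
    unfolding resample_def using pos by (intro mult_pos_pos) linarith+
qed

lemma sum_resample_Cons:
  assumes "length ys = k" "k < n"
  shows "(\<Sum>zs\<in>tuples (n - Suc k). resample k (ys @ y # zs)) = prefix_marg k ys * \<mu> y"
proof -
  have "(\<Sum>zs\<in>tuples (n - Suc k). resample k (ys @ y # zs))
      = (\<Sum>zs\<in>tuples (n - Suc k). (\<Sum>y'\<in>UNIV. p (ys @ y' # zs)) * \<mu> y)"
    using assms by (simp add: resample_def list_update_append nth_append)
  also have "\<dots> = \<mu> y * (\<Sum>y'\<in>UNIV. \<Sum>zs\<in>tuples (n - Suc k). p (ys @ y' # zs))"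
    by (simp add: sum_distrib_left sum_distrib_right mult.commute sum.swap[of _ UNIV])
  also have "\<dots> = \<mu> y * (\<Sum>y'\<in>UNIV. prefix_marg (Suc k) (ys @ [y']))"
    using assms by (simp add: prefix_marg_snoc)
  finally show ?thesis
    using assms by (simp add: sum_prefix_marg_snoc)
qed

lemma bhattacharyya_resample_le:
  assumes k: "k < n"
  shows "bhattacharyya (tuples n) p (resample k) \<le> bhattacharyya (tuples n) (hybrid (Suc k)) (hybrid k)"
proof -
  have "bhattacharyya (tuples n) p (resample k)
      = (\<Sum>ys\<in>tuples k. \<Sum>y\<in>UNIV. \<Sum>zs\<in>tuples (n - Suc k).
           sqrt (p (ys @ y # zs) * resample k (ys @ y # zs)))"
    unfolding bhattacharyya_def by (rule sum_tuples_split_at[OF k])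
  also have "\<dots> \<le> (\<Sum>ys\<in>tuples k. \<Sum>y\<in>UNIV.
      sqrt ((\<Sum>zs\<in>tuples (n - Suc k). p (ys @ y # zs)) *
            (\<Sum>zs\<in>tuples (n - Suc k). resample k (ys @ y # zs))))"
    using k by (intro sum_mono sum_sqrt_mult_le)
      (auto intro!: nonneg resample_nonneg simp: tuples_def)
  also have "\<dots> = bhattacharyya (tuples n) (hybrid (Suc k)) (hybrid k)"
    unfolding bhattacharyya_hybrid_Suc[OF k]
  proof (intro sum.cong refl)
    fix ys :: "'a list" and y :: 'a
    assume "ys \<in> tuples k"
    then have "length ys = k" by (simp add: tuples_def)
    then show "sqrt ((\<Sum>zs\<in>tuples (n - Suc k). p (ys @ y # zs)) *
                     (\<Sum>zs\<in>tuples (n - Suc k). resample k (ys @ y # zs)))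
             = sqrt (prefix_marg (Suc k) (ys @ [y]) * (prefix_marg k ys * \<mu> y))"
      using k by (simp add: sum_resample_Cons prefix_marg_snoc)
  qed
  finally show ?thesis .
qed

lemma bhattacharyya_resample_eq:
  assumes j: "j < n"
  shows "bhattacharyya (tuples n) p (resample j) = bhattacharyya (tuples n) p (resample (n - 1))"
proof -
  let ?\<tau> = "Transposition.transpose j (n - 1)"
  have \<tau>: "?\<tau> permutes {..<n}"
    using j by (intro permutes_swap_id) auto
  have "resample j (permute_list ?\<tau> xs) = resample (n - 1) xs" if xs: "xs \<in> tuples n" for xs
  proof -
    have len: "length xs = n" using xs by (simp add: tuples_def)
    have upd: "(permute_list ?\<tau> xs)[j := y] = permute_list ?\<tau> (xs[n - 1 := y])" for y
    proof (rule nth_equalityI)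
      fix i
      assume "i < length ((permute_list ?\<tau> xs)[j := y])"
      then show "(permute_list ?\<tau> xs)[j := y] ! i = permute_list ?\<tau> (xs[n - 1 := y]) ! i"
        using j len \<tau> by (auto simp: permute_list_nth nth_list_update Transposition.transpose_def)
    qed simp
    have "p (permute_list ?\<tau> (xs[n - 1 := y])) = p (xs[n - 1 := y])" for y
      using xs by (intro p_permute_list[OF \<tau>]) (simp add: tuples_def)
    moreover have "permute_list ?\<tau> xs ! j = xs ! (n - 1)"
      using j len \<tau> by (simp add: permute_list_nth)
    ultimately show ?thesis
      unfolding resample_def upd by simp
  qed
  then have "bhattacharyya (tuples n) p (resample (n - 1))
      = (\<Sum>xs\<in>tuples n. sqrt (p (permute_list ?\<tau> xs) * resample j (permute_list ?\<tau> xs)))"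
    unfolding bhattacharyya_def using \<tau> by (intro sum.cong refl) (simp add: p_permute_list)
  also have "\<dots> = bhattacharyya (tuples n) p (resample j)"
    unfolding bhattacharyya_def by (rule sum_tuples_permute_list[OF \<tau>])
  finally show ?thesis by simp
qed

lemma sqrt_dist_hybrid_Suc_sq_le:
  assumes k: "k < n"
  shows "(sqrt_dist (tuples n) (hybrid (Suc k)) (hybrid k))\<^sup>2
       \<le> 2 - 2 * bhattacharyya (tuples n) p (resample (n - 1))"
proof -
  have "(sqrt_dist (tuples n) (hybrid (Suc k)) (hybrid k))\<^sup>2
      = 2 - 2 * bhattacharyya (tuples n) (hybrid (Suc k)) (hybrid k)"
    using sqrt_dist_sq[of "tuples n" "hybrid (Suc k)" "hybrid k"] k
    by (simp add: hybrid_nonneg sum_hybrid)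
  then show ?thesis
    using bhattacharyya_resample_le[OF k] bhattacharyya_resample_eq[OF k] by simp
qed

lemma sqrt_dist_prod_marg_le:
  "sqrt_dist (tuples n) p (prod_marg p n)
     \<le> real (n - 1) * sqrt (2 - 2 * bhattacharyya (tuples n) p (resample (n - 1)))"
proof -
  have "sqrt_dist (tuples n) p (prod_marg p n) = sqrt_dist (tuples n) (hybrid (Suc (n - 1))) (hybrid 1)"
    unfolding sqrt_dist_def using n_pos hybrid_n hybrid_1 by (intro L2_set_cong) auto
  also have "\<dots> \<le> (\<Sum>k<n - 1. sqrt_dist (tuples n) (hybrid (Suc (Suc k))) (hybrid (Suc k)))"
    using sqrt_dist_telescope[where f="\<lambda>k. hybrid (Suc k)"] by simp
  also have "\<dots> \<le> (\<Sum>k<n - 1. sqrt (2 - 2 * bhattacharyya (tuples n) p (resample (n - 1))))"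
    by (intro sum_mono real_le_rsqrt sqrt_dist_hybrid_Suc_sq_le) auto
  finally show ?thesis by simp
qed

lemma bhattacharyya_resample_le_1: "bhattacharyya (tuples n) p (resample (n - 1)) \<le> 1"
proof -
  have "0 \<le> (sqrt_dist (tuples n) (hybrid (Suc (n - 1))) (hybrid (n - 1)))\<^sup>2"
    by simp
  then show ?thesis
    using sqrt_dist_hybrid_Suc_sq_le[of "n - 1"] n_pos by linarith
qed

lemma hellinger_sq_le:
  "(hellinger (tuples n) p (prod_marg p n))\<^sup>2
     \<le> (real (n - 1))\<^sup>2 * (1 - bhattacharyya (tuples n) p (resample (n - 1)))"
proof -
  have "(hellinger (tuples n) p (prod_marg p n))\<^sup>2 = (sqrt_dist (tuples n) p (prod_marg p n))\<^sup>2 / 2"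
    by (intro hellinger_sq) (auto simp: nonneg sum_eq_1 prod_marg_nonneg sum_prod_marg)
  also have "\<dots> \<le> (real (n - 1) * sqrt (2 - 2 * bhattacharyya (tuples n) p (resample (n - 1))))\<^sup>2 / 2"
    using sqrt_dist_prod_marg_le sqrt_dist_nonneg by (intro divide_right_mono power_mono) auto
  also have "\<dots> = (real (n - 1))\<^sup>2 * (1 - bhattacharyya (tuples n) p (resample (n - 1)))"
    using bhattacharyya_resample_le_1 by (simp add: power_mult_distrib)
  finally show ?thesis .
qed

lemma sum_snoc_eq_prefix_marg:
  "length ys = n - 1 \<Longrightarrow> (\<Sum>y\<in>UNIV. p (ys @ [y])) = prefix_marg (n - 1) ys"
  using n_pos by (simp add: prefix_marg_def sum_tuples_Suc_0)

lemma resample_snoc: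
  assumes "length ys = n - 1"
  shows "resample (n - 1) (ys @ [y]) = prefix_marg (n - 1) ys * \<mu> y"
  using assms sum_snoc_eq_prefix_marg[OF assms]
  by (simp add: resample_def list_update_append nth_append)

lemma marg_last: "marg p n (n - 1) a = (\<Sum>ys\<in>tuples (n - 1). p (ys @ [a]))"
proof -
  obtain n' where n': "n = Suc n'" using n_pos by (cases n) auto
  have "marg p n (n - 1) a = (\<Sum>ys\<in>tuples n'. \<Sum>y\<in>UNIV. if (ys @ [y]) ! n' = a then p (ys @ [y]) else 0)"
    unfolding marg_eq_sum_if by (simp only: n' sum_tuples_snoc diff_Suc_1)
  also have "\<dots> = (\<Sum>ys\<in>tuples n'. p (ys @ [a]))"
    by (intro sum.cong refl) (simp add: tuples_def nth_append)
  finally show ?thesis by (simp add: n')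
qed

lemma entropy_\<mu>:
  "entropy_fun UNIV \<mu> = - (\<Sum>ys\<in>tuples (n - 1). \<Sum>y\<in>UNIV. p (ys @ [y]) * ln (\<mu> y))"
proof -
  have "(\<Sum>a\<in>UNIV. \<mu> a * ln (\<mu> a)) = (\<Sum>a\<in>UNIV. marg p n (n - 1) a * ln (\<mu> a))"
    using marg_eq_\<mu>[of "n - 1"] n_pos by simp
  also have "\<dots> = (\<Sum>ys\<in>tuples (n - 1). \<Sum>y\<in>UNIV. p (ys @ [y]) * ln (\<mu> y))"
    using marg_last by (simp add: sum_distrib_right sum.swap[of _ UNIV])
  finally show ?thesis by (simp add: entropy_fun_def)
qed

lemma cond_entropy_last_eq:
  "cond_entropy_last p n
     = - (\<Sum>ys\<in>tuples (n - 1). \<Sum>y\<in>UNIV. p (ys @ [y]) * ln (p (ys @ [y]) / prefix_marg (n - 1) ys))"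
proof -
  have "cond_entropy_last p n
      = (\<Sum>ys\<in>tuples (n - 1). - (\<Sum>y\<in>UNIV. p (ys @ [y]) * ln (p (ys @ [y]) / prefix_marg (n - 1) ys)))"
    unfolding cond_entropy_last_def
  proof (intro sum.cong refl)
    fix ys :: "'a list"
    assume "ys \<in> tuples (n - 1)"
    then have len: "length ys = n - 1"
      by (simp add: tuples_def)
    have "\<And>y. p (ys @ [y]) \<ge> 0"
      using len n_pos by (intro nonneg) (simp add: tuples_def)
    then have "(let Py = \<Sum>y\<in>UNIV. p (ys @ [y]) in Py * entropy_fun UNIV (\<lambda>y. p (ys @ [y]) / Py))
        = - (\<Sum>y\<in>UNIV. p (ys @ [y]) * ln (p (ys @ [y]) / (\<Sum>y\<in>UNIV. p (ys @ [y]))))"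
      by (rule scaled_entropy_normalize)
    then show "(let Py = \<Sum>y\<in>UNIV. p (ys @ [y]) in Py * entropy_fun UNIV (\<lambda>y. p (ys @ [y]) / Py))
        = - (\<Sum>y\<in>UNIV. p (ys @ [y]) * ln (p (ys @ [y]) / prefix_marg (n - 1) ys))"
      by (simp only: sum_snoc_eq_prefix_marg[OF len])
  qed
  then show ?thesis by (simp add: sum_negf)
qed

text \<open>The entropy gap is the mutual information of the last coordinate and the others.\<close>
lemma entropy_minus_cond_entropy_last:
  "entropy_fun UNIV \<mu> - cond_entropy_last p n
     = (\<Sum>xs\<in>tuples n. p xs * ln (p xs / resample (n - 1) xs))"
proof -
  have "entropy_fun UNIV \<mu> - cond_entropy_last p n
      = (\<Sum>ys\<in>tuples (n - 1). \<Sum>y\<in>UNIV.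
           p (ys @ [y]) * ln (p (ys @ [y]) / prefix_marg (n - 1) ys) - p (ys @ [y]) * ln (\<mu> y))"
    by (simp add: entropy_\<mu> cond_entropy_last_eq sum_subtractf)
  also have "\<dots> = (\<Sum>ys\<in>tuples (n - 1). \<Sum>y\<in>UNIV.
      p (ys @ [y]) * ln (p (ys @ [y]) / resample (n - 1) (ys @ [y])))"
  proof (intro sum.cong refl)
    fix ys :: "'a list" and y :: 'a
    assume "ys \<in> tuples (n - 1)"
    then have len: "length ys = n - 1" and xs: "ys @ [y] \<in> tuples n"
      using n_pos by (auto simp: tuples_def)
    show "p (ys @ [y]) * ln (p (ys @ [y]) / prefix_marg (n - 1) ys) - p (ys @ [y]) * ln (\<mu> y)
        = p (ys @ [y]) * ln (p (ys @ [y]) / resample (n - 1) (ys @ [y]))"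
    proof (cases "p (ys @ [y]) = 0")
      case False
      then have "p (ys @ [y]) > 0"
        using nonneg[OF xs] by simp
      moreover from this have "prefix_marg (n - 1) ys * \<mu> y > 0"
        using resample_pos[OF xs, of "n - 1"] resample_snoc[OF len] n_pos by simp
      moreover have "prefix_marg (n - 1) ys \<ge> 0"
        using len by (intro prefix_marg_nonneg) auto
      ultimately show ?thesis
        using marg_nonneg[of 0 y] resample_snoc[OF len]
        by (simp add: zero_less_mult_iff ln_div ln_mult algebra_simps)
    qed simp
  qed
  also have "\<dots> = (\<Sum>xs\<in>tuples n. p xs * ln (p xs / resample (n - 1) xs))"
    using sum_tuples_snoc[of "\<lambda>xs. p xs * ln (p xs / resample (n - 1) xs)" "n - 1"] n_pos by simp
  finally show ?thesis .
qed

lemma bhattacharyya_resample_ge: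
  "2 - 2 * bhattacharyya (tuples n) p (resample (n - 1)) \<le> entropy_fun UNIV \<mu> - cond_entropy_last p n"
  unfolding entropy_minus_cond_entropy_last
  using relative_entropy_ge_bhattacharyya[of "tuples n" p "resample (n - 1)"] n_pos
  by (simp add: nonneg resample_nonneg resample_pos sum_eq_1)

end

theorem lemma3p3:
  fixes p :: "'a::finite list \<Rightarrow> real" and t :: nat and \<epsilon> :: real
  assumes "t \<ge> 2"
    and "\<forall>xs\<in>tuples t. p xs \<ge> 0"
    and "(\<Sum>xs\<in>tuples t. p xs) = 1"
    and "\<forall>\<sigma> xs. \<sigma> permutes {..<t} \<and> xs \<in> tuples t \<longrightarrow>
           p (map (\<lambda>i. xs ! \<sigma> i) [0..<t]) = p xs"
    and "0 \<le> \<epsilon>"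
    and "hellinger (tuples t) p (prod_marg p t) \<ge> \<epsilon>"
  shows "cond_entropy_last p t \<le> entropy_fun UNIV (marg p t 0) - 2 * \<epsilon>^2 / t^2"
proof -
  interpret exchangeable p t
    by unfold_locales (use assms in auto)
  define B where "B = bhattacharyya (tuples t) p (resample (t - 1))"
  have "\<epsilon>\<^sup>2 \<le> (hellinger (tuples t) p (prod_marg p t))\<^sup>2"
    using assms(5,6) by (intro power_mono) auto
  also have "\<dots> \<le> (real (t - 1))\<^sup>2 * (1 - B)"
    unfolding B_def by (rule hellinger_sq_le)
  also have "\<dots> \<le> (real t)\<^sup>2 * (1 - B)"
    using bhattacharyya_resample_le_1 unfolding B_def by (intro mult_right_mono power_mono) auto
  finally have "2 * \<epsilon>\<^sup>2 / (real t)\<^sup>2 \<le> 2 * (1 - B)"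
    using assms(1) by (simp add: field_simps)
  also have "\<dots> \<le> entropy_fun UNIV \<mu> - cond_entropy_last p t"
    using bhattacharyya_resample_ge unfolding B_def by simp
  finally show ?thesis by simp
qed

end
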